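(* Consider the following optical-network model. Each link $k$ has a set $A_k\subseteq\mathbb{Z}$ of available units. Each trait $t$ has a resource $\mathrm{RI}(t)$, a nonempty integer interval, and for each link $k$ the set $t\oplus k$ of derived traits satisfies: every $t'\in t\oplus k$ has $\mathrm{RI}(t')$ a maximal integer interval contained in $\mathrm{RI}(t)\cap A_k$, and for every maximal integer interval $J\subseteq \mathrm{RI}(t)\cap A_k$ there is $t'\in t\oplus k$ with $\mathrm{RI}(t')=J$. Fix a link $k$ and, for a label $l=(t_a,t_b)$ whose routes end at different nodes, let $l\oplus e=\{(t,t_b): t\in t_a\oplus k\}$, the resulting routes still ending at different nodes. Let $\mathrm{cost}$ be a real-valued function on labels such that for any labels $l_i,l_j$: if $\mathrm{cost}(l_i)\le\mathrm{cost}(l_j)$ then $\mathrm{cost}(l')\le\mathrm{cost}(l)$ for all $l'\in l_i\oplus e$ and all $l\in l_j\oplus e$. Let $l_i=(t_{i,a},t_{i,b})$, $l_j=(t_{j,a},t_{j,b})$ be labels. If $l_i\preceq'_{\ne} l_j$, then for every $l\in l_j\oplus e$ there exists $l'\in l_i\oplus e$ with $l'\preceq'_{\ne} l$.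
   Context: A trait describes a route (sequence of neighboring links) in an optical network together with its cost and the interval of contiguous frequency slot units available on all its links; $t\oplus k$ is the set of traits obtained by appending link $k$. A label is a pair of traits of two link-disjoint routes. For labels $l_i=(t_{i,a},t_{i,b})$, $l_j=(t_{j,a},t_{j,b})$ whose routes end at different nodes: $\mathrm{RI}(l_i)\supseteq_{\ne}\mathrm{RI}(l_j)$ iff $\mathrm{RI}(t_{i,a})\supseteq\mathrm{RI}(t_{j,a})$ and $\mathrm{RI}(t_{i,b})\supseteq\mathrm{RI}(t_{j,b})$; and $l_i\preceq'_{\ne} l_j$ iff $\mathrm{cost}(l_i)\le\mathrm{cost}(l_j)$ and $\mathrm{RI}(l_i)\supseteq_{\ne}\mathrm{RI}(l_j)$. *)

theory Defs
  imports Complex_Main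
begin

definition int_interval :: "int set \<Rightarrow> bool" where
  "int_interval I \<longleftrightarrow> (\<exists>a b. a \<le> b \<and> I = {a..b})"

definition max_int_interval_in :: "int set \<Rightarrow> int set \<Rightarrow> bool" where
  "max_int_interval_in J S \<longleftrightarrow> int_interval J \<and> J \<subseteq> S \<and>
     (\<forall>J'. int_interval J' \<and> J \<subseteq> J' \<and> J' \<subseteq> S \<longrightarrow> J' = J)"

definition label_ext :: "('t \<Rightarrow> 'k \<Rightarrow> 't set) \<Rightarrow> 'k \<Rightarrow> 't \<times> 't \<Rightarrow> ('t \<times> 't) set" where
  "label_ext oplus k l = {(t, snd l) | t. t \<in> oplus (fst l) k}"

definition RI_sup_ne :: "('t \<Rightarrow> int set) \<Rightarrow> 't \<times> 't \<Rightarrow> 't \<times> 't \<Rightarrow> bool" where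
  "RI_sup_ne RI li lj \<longleftrightarrow> RI (fst li) \<supseteq> RI (fst lj) \<and> RI (snd li) \<supseteq> RI (snd lj)"

definition dom_ne :: "('t \<times> 't \<Rightarrow> real) \<Rightarrow> ('t \<Rightarrow> int set) \<Rightarrow> 't \<times> 't \<Rightarrow> 't \<times> 't \<Rightarrow> bool" where
  "dom_ne cost RI li lj \<longleftrightarrow> cost li \<le> cost lj \<and> RI_sup_ne RI li lj"

end

theory Submission
  imports Defs
begin

text \<open>
  Only the first trait of a label is extended, and the extension depends on that trait only
  through its resource.  If RI(t_{j,a}) \<subseteq> RI(t_{i,a}), each maximal interval J of
  RI(t_{j,a}) \<inter> A_k is an interval inside the finite set RI(t_{i,a}) \<inter> A_k, so it extends to a
  maximal interval J' of the latter; the trait of t_{i,a} \<oplus> k with resource J' yields the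
  dominating label, and its cost is controlled by the monotonicity of cost.
\<close>

lemma int_interval_finite: "int_interval I \<Longrightarrow> finite I"
  unfolding int_interval_def by auto

lemma max_int_interval_in_extends:
  assumes "finite S" and "int_interval J" and "J \<subseteq> S"
  shows "\<exists>J'. max_int_interval_in J' S \<and> J \<subseteq> J'"
proof -
  let ?C = "{I. int_interval I \<and> I \<subseteq> S}"
  have "finite ?C"
    using \<open>finite S\<close> by (simp add: finite_subset[of ?C "Pow S"])
  moreover have "J \<in> ?C"
    using assms by simp
  ultimately obtain J' where "J' \<in> ?C" "J \<subseteq> J'" "\<forall>I\<in>?C. J' \<subseteq> I \<longrightarrow> I = J'"
    by (metis (no_types, lifting) finite_has_maximal2)
  then show ?thesis
    unfolding max_int_interval_in_def by blast
qed

lemma oplus_resource_mono: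
  fixes RI :: "'t \<Rightarrow> int set"
  assumes oplus_max: "\<And>t k t'. t' \<in> oplus t k \<Longrightarrow> max_int_interval_in (RI t') (RI t \<inter> A k)"
    and oplus_all: "\<And>t k J. max_int_interval_in J (RI t \<inter> A k) \<Longrightarrow> \<exists>t'\<in>oplus t k. RI t' = J"
    and "finite (RI s)" and "RI s0 \<subseteq> RI s" and "t \<in> oplus s0 k"
  shows "\<exists>t'\<in>oplus s k. RI t \<subseteq> RI t'"
proof -
  have "int_interval (RI t)" and "RI t \<subseteq> RI s \<inter> A k"
    using oplus_max[OF \<open>t \<in> oplus s0 k\<close>] \<open>RI s0 \<subseteq> RI s\<close>
    unfolding max_int_interval_in_def by auto
  then obtain J where "max_int_interval_in J (RI s \<inter> A k)" "RI t \<subseteq> J"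
    using max_int_interval_in_extends[of "RI s \<inter> A k"] \<open>finite (RI s)\<close> by blast
  then show ?thesis
    using oplus_all by blast
qed

theorem proposition4:
  fixes RI :: "'t \<Rightarrow> int set"
    and A :: "'k \<Rightarrow> int set"
    and oplus :: "'t \<Rightarrow> 'k \<Rightarrow> 't set"
    and endnode :: "'t \<Rightarrow> 'n"
    and cost :: "'t \<times> 't \<Rightarrow> real"
    and k :: 'k
    and li lj :: "'t \<times> 't"
  assumes RI_int: "\<And>t. int_interval (RI t)"
    and oplus_max: "\<And>t k t'. t' \<in> oplus t k \<Longrightarrow> max_int_interval_in (RI t') (RI t \<inter> A k)"
    and oplus_all: "\<And>t k J. max_int_interval_in J (RI t \<inter> A k) \<Longrightarrow> \<exists>t'\<in>oplus t k. RI t' = J"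
    and li_ne: "endnode (fst li) \<noteq> endnode (snd li)"
    and lj_ne: "endnode (fst lj) \<noteq> endnode (snd lj)"
    and ext_ne: "\<And>l l'. endnode (fst l) \<noteq> endnode (snd l) \<Longrightarrow> l' \<in> label_ext oplus k l \<Longrightarrow>
                   endnode (fst l') \<noteq> endnode (snd l')"
    and cost_mono: "\<And>l1 l2. cost l1 \<le> cost l2 \<Longrightarrow>
                   (\<forall>l'\<in>label_ext oplus k l1. \<forall>l\<in>label_ext oplus k l2. cost l' \<le> cost l)"
    and dom: "dom_ne cost RI li lj"
  shows "\<forall>l\<in>label_ext oplus k lj. \<exists>l'\<in>label_ext oplus k li. dom_ne cost RI l' l"
proof
  fix l assume l: "l \<in> label_ext oplus k lj"
  then obtain t where t: "t \<in> oplus (fst lj) k" and l_eq: "l = (t, snd lj)"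
    unfolding label_ext_def by auto
  have RI_le: "RI (fst lj) \<subseteq> RI (fst li)" "RI (snd lj) \<subseteq> RI (snd li)"
    and cost_le: "cost li \<le> cost lj"
    using dom unfolding dom_ne_def RI_sup_ne_def by auto
  have "finite (RI (fst li))"
    using RI_int by (rule int_interval_finite)
  then obtain t' where t': "t' \<in> oplus (fst li) k" and "RI t \<subseteq> RI t'"
    using oplus_resource_mono[where RI = RI and A = A and oplus = oplus,
        OF oplus_max oplus_all _ RI_le(1) t]
    by blast
  have l': "(t', snd li) \<in> label_ext oplus k li"
    using t' unfolding label_ext_def by auto
  have "cost (t', snd li) \<le> cost l"
    using cost_mono[OF cost_le] l l' by blast
  with \<open>RI t \<subseteq> RI t'\<close> RI_le(2) have "dom_ne cost RI (t', snd li) l"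
    unfolding l_eq dom_ne_def RI_sup_ne_def by simp
  with l' show "\<exists>l'\<in>label_ext oplus k li. dom_ne cost RI l' l" ..
qed

end
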